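(* Let $T\in(\mathbb{C}^n)^{\otimes3}$ be an $r$-diagonalisable symmetric tensor, $T=\sum_{i=1}^ru_i^{\otimes3}$ with $u_1,\dots,u_r$ linearly independent. Let $P\in\mathbb{C}^{n\times r}$ be a semi-unitary matrix whose columns span $\mathrm{span}\{u_1,\dots,u_r\}$, and let $T'=(\overline P\otimes\overline P\otimes\overline P).T\in(\mathbb{C}^r)^{\otimes3}$. Then $T'$ is diagonalisable and $\kappa(T)=\kappa(T')$.
   Context: A symmetric tensor is $r$-diagonalisable if it equals $\sum_{i=1}^r u_i^{\otimes3}$ with the $u_i$ linearly independent (diagonalisable when $r$ equals the ambient dimension). $\kappa(T)=\|U\|_F^2+\|U^\dagger\|_F^2$, where $U$ has rows $u_1,\dots,u_r$ and $U^\dagger$ is the Moore–Penrose pseudoinverse; this does not depend on the decomposition. $P$ semi-unitary means $P^*P=I_r$; $\overline P$ is the entrywise complex conjugate. For $A\in\mathbb{C}^{n\times r}$, $\big((A\otimes A\otimes A).T\big)_{i_1i_2i_3}=\sum_{j_1,j_2,j_3}A_{j_1i_1}A_{j_2i_2}A_{j_3i_3}T_{j_1j_2j_3}$, so $(\overline P\otimes\overline P\otimes\overline P).(u^{\otimes3})=(P^*u)^{\otimes3}$. *)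

theory Defs
  imports Complex_Main "Jordan_Normal_Form.Matrix"
begin

definition ctrans :: "complex mat \<Rightarrow> complex mat" where
  "ctrans A = mat (dim_col A) (dim_row A) (\<lambda>(i,j). cnj (A $$ (j,i)))"

definition pinv :: "complex mat \<Rightarrow> complex mat" where
  "pinv A = (THE X. X \<in> carrier_mat (dim_col A) (dim_row A) \<and>
      A * X * A = A \<and> X * A * X = X \<and>
      ctrans (A * X) = A * X \<and> ctrans (X * A) = X * A)"

definition frob2 :: "complex mat \<Rightarrow> real" where
  "frob2 A = (\<Sum>i<dim_row A. \<Sum>j<dim_col A. (cmod (A $$ (i,j)))^2)"

text \<open>Order-3 tensors on C^n are functions of three indices; only indices < n matter.
  \<open>r_decomp n r T U\<close>: U is an r x n matrix whose rows u_1..u_r are linearly independent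
  and T = sum_i u_i^{\<otimes>3}.\<close>
definition r_decomp :: "nat \<Rightarrow> nat \<Rightarrow> (nat \<Rightarrow> nat \<Rightarrow> nat \<Rightarrow> complex) \<Rightarrow> complex mat \<Rightarrow> bool" where
  "r_decomp n r T U \<longleftrightarrow> U \<in> carrier_mat r n \<and>
     (\<forall>c::nat \<Rightarrow> complex. (\<forall>a<n. (\<Sum>i<r. c i * U $$ (i,a)) = 0) \<longrightarrow> (\<forall>i<r. c i = 0)) \<and>
     (\<forall>a<n. \<forall>b<n. \<forall>c<n. T a b c = (\<Sum>i<r. U $$ (i,a) * U $$ (i,b) * U $$ (i,c)))"

definition r_diagonalisable :: "nat \<Rightarrow> nat \<Rightarrow> (nat \<Rightarrow> nat \<Rightarrow> nat \<Rightarrow> complex) \<Rightarrow> bool" where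
  "r_diagonalisable n r T \<longleftrightarrow> (\<exists>U. r_decomp n r T U)"

definition diagonalisable :: "nat \<Rightarrow> (nat \<Rightarrow> nat \<Rightarrow> nat \<Rightarrow> complex) \<Rightarrow> bool" where
  "diagonalisable n T \<longleftrightarrow> r_diagonalisable n n T"

definition kappa :: "nat \<Rightarrow> (nat \<Rightarrow> nat \<Rightarrow> nat \<Rightarrow> complex) \<Rightarrow> real" where
  "kappa n T = (let U = (SOME U. \<exists>r. r_decomp n r T U) in frob2 U + frob2 (pinv U))"

text \<open>(A \<otimes> A \<otimes> A).T for A of size n x r.\<close>
definition tmul3 :: "complex mat \<Rightarrow> (nat \<Rightarrow> nat \<Rightarrow> nat \<Rightarrow> complex) \<Rightarrow> (nat \<Rightarrow> nat \<Rightarrow> nat \<Rightarrow> complex)" where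
  "tmul3 A T = (\<lambda>i1 i2 i3. \<Sum>j1<dim_row A. \<Sum>j2<dim_row A. \<Sum>j3<dim_row A.
      A $$ (j1,i1) * A $$ (j2,i2) * A $$ (j3,i3) * T j1 j2 j3)"

definition conj_mat :: "complex mat \<Rightarrow> complex mat" where
  "conj_mat A = map_mat cnj A"

end

(*
  Two decompositions T = sum_i u_i^(x3) = sum_j v_j^(x3) with independent rows U and V differ
  by an isometry. Contracting T twice with the dual basis of the u_i (the columns of a right
  inverse X of U) expresses each u_k through the v_j: U = S^T V, where S is the entrywise square
  of M = V X. Doing the same the other way round gives V = M U and shows that the entrywise fourth
  power of M is M, so its entries are 0 or cube roots of unity; contracting three times shows that
  every row of M has exactly one nonzero entry, whence M^* M = I. Frobenius norms and
  Moore-Penrose pseudoinverses are compatible with isometries, pinv (M U) being pinv U M^*, so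
  kappa does not depend on the decomposition.
  The compressed tensor is decomposed by V = U conj(P), i.e. by the vectors P^* u_i. As the rows
  of U lie in the column space of P, U = V P^T with P^T a co-isometry, so V again has independent
  rows and kappa is unchanged.
*)

theory Submission
  imports Defs "Jordan_Normal_Form.Determinant"
begin

section \<open>Matrix products and conjugate transpose\<close>

lemma index_mult_mat_sum:
  assumes "A \<in> carrier_mat m n" "B \<in> carrier_mat n k" "i < m" "j < k"
  shows "(A * B) $$ (i,j) = (\<Sum>l<n. A $$ (i,l) * B $$ (l,j))"
  using assms by (auto simp: scalar_prod_def lessThan_atLeast0 intro!: sum.cong)

lemma index_mult_mat_vec_sum:
  assumes "A \<in> carrier_mat m n" "v \<in> carrier_vec n" "i < m"
  shows "(A *\<^sub>v v) $ i = (\<Sum>l<n. A $$ (i,l) * v $ l)"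
  using assms by (auto simp: scalar_prod_def lessThan_atLeast0 intro!: sum.cong)

lemma assoc_mult_mat_dims:
  "dim_col A = dim_row B \<Longrightarrow> dim_col B = dim_row C \<Longrightarrow> A * B * C = A * (B * C)"
  by (rule assoc_mult_mat[OF carrier_mat_triv _ carrier_mat_triv]) auto

lemma ctrans_carrier [simp]: "ctrans A \<in> carrier_mat (dim_col A) (dim_row A)"
  and dim_row_ctrans [simp]: "dim_row (ctrans A) = dim_col A"
  and dim_col_ctrans [simp]: "dim_col (ctrans A) = dim_row A"
  unfolding ctrans_def by auto

lemma ctrans_carrier_mat [simp]: "A \<in> carrier_mat m n \<Longrightarrow> ctrans A \<in> carrier_mat n m"
  by auto

lemma index_ctrans [simp]:
  "i < dim_col A \<Longrightarrow> j < dim_row A \<Longrightarrow> ctrans A $$ (i,j) = cnj (A $$ (j,i))"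
  unfolding ctrans_def by auto

lemma ctrans_ctrans [simp]: "ctrans (ctrans A) = A"
  by (rule eq_matI) auto

lemma ctrans_one [simp]: "ctrans (1\<^sub>m n) = 1\<^sub>m n"
  by (rule eq_matI) auto

lemma ctrans_mult: "dim_col A = dim_row B \<Longrightarrow> ctrans (A * B) = ctrans B * ctrans A"
  by (rule eq_matI) (auto simp: scalar_prod_def cnj_sum mult.commute intro!: sum.cong)

lemma transpose_ctrans: "transpose_mat (ctrans A) = conj_mat A"
  unfolding conj_mat_def by (rule eq_matI) auto

lemma ctrans_transpose: "ctrans (transpose_mat A) = conj_mat A"
  unfolding conj_mat_def by (rule eq_matI) auto

section \<open>Pseudoinverses, Frobenius norm and isometries\<close>

definition is_pinv :: "complex mat \<Rightarrow> complex mat \<Rightarrow> bool" where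
  "is_pinv A X \<longleftrightarrow> X \<in> carrier_mat (dim_col A) (dim_row A) \<and> A * X * A = A \<and> X * A * X = X \<and>
      ctrans (A * X) = A * X \<and> ctrans (X * A) = X * A"

lemma is_pinv_unique:
  assumes X: "is_pinv A X" and Y: "is_pinv A Y"
  shows "X = Y"
proof -
  note X' = X[unfolded is_pinv_def] and Y' = Y[unfolded is_pinv_def]
  have dims: "dim_row X = dim_col A" "dim_col X = dim_row A" "dim_row Y = dim_col A" "dim_col Y = dim_row A"
    using X' Y' by auto
  have "A * X = (A * Y * A) * X" using Y' by simp
  also have "\<dots> = (A * Y) * (A * X)" using dims by (simp add: assoc_mult_mat_dims)
  also have "\<dots> = ctrans (A * Y) * ctrans (A * X)" using X' Y' by simp
  also have "\<dots> = ctrans (A * X * A * Y)" using dims by (simp add: ctrans_mult assoc_mult_mat_dims)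
  also have "\<dots> = A * Y" using X' Y' by simp
  finally have AX: "A * X = A * Y" .
  have "X * A = X * (A * Y * A)" using Y' by simp
  also have "\<dots> = (X * A) * (Y * A)" using dims by (simp add: assoc_mult_mat_dims)
  also have "\<dots> = ctrans (X * A) * ctrans (Y * A)" using X' Y' by simp
  also have "\<dots> = ctrans (Y * (A * X * A))" using dims by (simp add: ctrans_mult assoc_mult_mat_dims)
  also have "\<dots> = Y * A" using X' Y' by simp
  finally have XA: "X * A = Y * A" .
  have "X = X * A * X" using X' by simp
  also have "\<dots> = Y * (A * X)" using XA dims by (simp add: assoc_mult_mat_dims)
  also have "\<dots> = Y * A * Y" using AX dims by (simp add: assoc_mult_mat_dims)
  also have "\<dots> = Y" using Y' by simp
  finally show ?thesis .
qed

lemma pinv_eqI: "is_pinv A X \<Longrightarrow> pinv A = X"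
  unfolding pinv_def by (rule the_equality) (auto simp: is_pinv_def[symmetric] intro: is_pinv_unique)

lemma is_pinv_ctrans:
  assumes "is_pinv A X"
  shows "is_pinv (ctrans A) (ctrans X)"
proof -
  note X = assms[unfolded is_pinv_def]
  then have dims: "dim_row X = dim_col A" "dim_col X = dim_row A" by auto
  have "ctrans A * ctrans X * ctrans A = ctrans (A * X * A)"
    using dims by (simp add: ctrans_mult assoc_mult_mat_dims)
  moreover have "ctrans X * ctrans A * ctrans X = ctrans (X * A * X)"
    using dims by (simp add: ctrans_mult assoc_mult_mat_dims)
  moreover have "ctrans A * ctrans X = ctrans (X * A)" "ctrans X * ctrans A = ctrans (A * X)"
    using dims by (simp_all add: ctrans_mult)
  ultimately show ?thesis
    using X unfolding is_pinv_def by auto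
qed

lemma isometry_cancel:
  assumes "M \<in> carrier_mat k m" "ctrans M * M = 1\<^sub>m m" "dim_row B = m"
  shows "ctrans M * (M * B) = B"
proof -
  have "ctrans M * (M * B) = (ctrans M * M) * B"
    using assms(1,3) by (simp add: assoc_mult_mat_dims)
  also have "\<dots> = B"
    unfolding assms(2) using assms(3) by (rule left_mult_one_mat')
  finally show ?thesis .
qed

lemma is_pinv_mult_isometry:
  assumes X: "is_pinv A X" and M: "M \<in> carrier_mat k (dim_row A)"
    and isometry: "ctrans M * M = 1\<^sub>m (dim_row A)"
  shows "is_pinv (M * A) (X * ctrans M)"
proof -
  note X' = X[unfolded is_pinv_def]
  then have dims: "dim_row X = dim_col A" "dim_col X = dim_row A" by auto
  note cancel = isometry_cancel[OF M isometry]
  have "M * A * (X * ctrans M) * (M * A) = M * (A * X * (ctrans M * (M * A)))"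
    using M dims by (simp add: assoc_mult_mat_dims)
  also have "\<dots> = M * A" using X' cancel by simp
  finally have penrose1: "M * A * (X * ctrans M) * (M * A) = M * A" .
  have "X * ctrans M * (M * A) * (X * ctrans M) = X * (ctrans M * (M * A)) * X * ctrans M"
    using M dims by (simp add: assoc_mult_mat_dims)
  also have "\<dots> = X * ctrans M" using X' cancel by simp
  finally have penrose2: "X * ctrans M * (M * A) * (X * ctrans M) = X * ctrans M" .
  have "ctrans (M * A * (X * ctrans M)) = M * ctrans (A * X) * ctrans M"
    using M dims by (simp add: ctrans_mult assoc_mult_mat_dims)
  also have "\<dots> = M * A * (X * ctrans M)"
    using M X' dims by (simp add: assoc_mult_mat_dims)
  finally have penrose3: "ctrans (M * A * (X * ctrans M)) = M * A * (X * ctrans M)" .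
  have "X * ctrans M * (M * A) = X * A"
    using M dims cancel by (simp add: assoc_mult_mat_dims)
  then have penrose4: "ctrans (X * ctrans M * (M * A)) = X * ctrans M * (M * A)"
    using X' by simp
  show ?thesis
    using penrose1 penrose2 penrose3 penrose4 M dims unfolding is_pinv_def by auto
qed

lemma frob2_ctrans: "frob2 (ctrans A) = frob2 A"
  unfolding frob2_def by (subst sum.swap) simp

lemma of_real_frob2: "complex_of_real (frob2 A) = (\<Sum>j<dim_col A. (ctrans A * A) $$ (j,j))"
proof -
  have "complex_of_real (frob2 A) = (\<Sum>j<dim_col A. \<Sum>i<dim_row A. cnj (A $$ (i,j)) * A $$ (i,j))"
    unfolding frob2_def of_real_sum complex_norm_square
    by (subst sum.swap) (simp add: mult.commute)
  also have "\<dots> = (\<Sum>j<dim_col A. (ctrans A * A) $$ (j,j))"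
    by (intro sum.cong refl, subst index_mult_mat_sum[of _ "dim_col A" "dim_row A" _ "dim_col A"]) auto
  finally show ?thesis .
qed

lemma frob2_mult_isometry:
  assumes "M \<in> carrier_mat k (dim_row A)" and "ctrans M * M = 1\<^sub>m (dim_row A)"
  shows "frob2 (M * A) = frob2 A"
proof -
  have "ctrans (M * A) * (M * A) = ctrans A * (ctrans M * (M * A))"
    using assms by (simp add: ctrans_mult assoc_mult_mat_dims)
  then have "ctrans (M * A) * (M * A) = ctrans A * A"
    using assms by (simp add: isometry_cancel)
  then have "complex_of_real (frob2 (M * A)) = complex_of_real (frob2 A)"
    by (simp add: of_real_frob2)
  then show ?thesis by simp
qed

definition kappa_mat :: "complex mat \<Rightarrow> real" where
  "kappa_mat U = frob2 U + frob2 (pinv U)"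

lemma kappa_mat_ctrans: "is_pinv A X \<Longrightarrow> kappa_mat (ctrans A) = kappa_mat A"
  unfolding kappa_mat_def
  by (simp add: pinv_eqI[OF is_pinv_ctrans] pinv_eqI frob2_ctrans)

lemma kappa_mat_mult_isometry:
  assumes "is_pinv A X" "M \<in> carrier_mat k (dim_row A)" "ctrans M * M = 1\<^sub>m (dim_row A)"
  shows "kappa_mat (M * A) = kappa_mat A"
proof -
  have "frob2 (X * ctrans M) = frob2 (ctrans (X * ctrans M))"
    by (rule frob2_ctrans[symmetric])
  also have "\<dots> = frob2 (M * ctrans X)"
    using assms(1,2) unfolding is_pinv_def by (subst ctrans_mult) auto
  also have "\<dots> = frob2 (ctrans X)"
    by (rule frob2_mult_isometry) (use assms in \<open>auto simp: is_pinv_def\<close>)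
  also have "\<dots> = frob2 X"
    by (rule frob2_ctrans)
  finally show ?thesis
    using assms unfolding kappa_mat_def
    by (simp add: pinv_eqI[OF is_pinv_mult_isometry[OF assms]] pinv_eqI frob2_mult_isometry)
qed

lemma kappa_mat_mult_coisometry:
  assumes X: "is_pinv A X" and Q: "Q \<in> carrier_mat (dim_col A) k"
    and coisometry: "Q * ctrans Q = 1\<^sub>m (dim_col A)"
  shows "kappa_mat (A * Q) = kappa_mat A"
proof -
  have X': "is_pinv (ctrans A) (ctrans X)"
    using X by (rule is_pinv_ctrans)
  have Q': "ctrans Q \<in> carrier_mat k (dim_row (ctrans A))"
    and Q'_isometry: "ctrans (ctrans Q) * ctrans Q = 1\<^sub>m (dim_row (ctrans A))"
    using Q coisometry by auto
  have "kappa_mat (A * Q) = kappa_mat (ctrans (ctrans Q * ctrans A))"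
    using Q by (simp add: ctrans_mult)
  also have "\<dots> = kappa_mat (ctrans Q * ctrans A)"
    using is_pinv_mult_isometry[OF X' Q' Q'_isometry] by (rule kappa_mat_ctrans)
  also have "\<dots> = kappa_mat (ctrans A)"
    using kappa_mat_mult_isometry[OF X' Q' Q'_isometry] .
  also have "\<dots> = kappa_mat A"
    using X by (rule kappa_mat_ctrans)
  finally show ?thesis .
qed

section \<open>Matrices with independent rows\<close>

definition rows_lin_indep :: "complex mat \<Rightarrow> bool" where
  "rows_lin_indep U \<longleftrightarrow> (\<forall>c. (\<forall>a<dim_col U. (\<Sum>i<dim_row U. c i * U $$ (i,a)) = 0) \<longrightarrow> (\<forall>i<dim_row U. c i = 0))"

lemma gram_mat_vec_eq_zero_imp:
  assumes U: "U \<in> carrier_mat r n" and indep: "rows_lin_indep U"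
    and v: "v \<in> carrier_vec r" and Gv: "(U * ctrans U) *\<^sub>v v = 0\<^sub>v r"
  shows "v = 0\<^sub>v r"
proof -
  define w where "w = ctrans U *\<^sub>v v"
  have w: "w \<in> carrier_vec n" unfolding w_def using U by (simp add: carrier_vecI)
  have cnj_w: "cnj (w $ a) = (\<Sum>i<r. cnj (v $ i) * U $$ (i,a))" if "a < n" for a
    unfolding w_def using that U v
    by (subst index_mult_mat_vec_sum[of _ n r]) (auto simp: cnj_sum mult.commute)
  have "U *\<^sub>v w = (U * ctrans U) *\<^sub>v v"
    unfolding w_def by (rule assoc_mult_mat_vec[symmetric, OF U _ v]) (use U in auto)
  then have Uw: "U *\<^sub>v w = 0\<^sub>v r"
    using Gv by simp
  have "(\<Sum>a<n. cnj (w $ a) * w $ a) = (\<Sum>a<n. \<Sum>i<r. cnj (v $ i) * (U $$ (i,a) * w $ a))"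
    using cnj_w by (simp add: sum_distrib_right mult.assoc)
  also have "\<dots> = (\<Sum>i<r. cnj (v $ i) * (U *\<^sub>v w) $ i)"
    by (subst sum.swap) (simp add: index_mult_mat_vec_sum[OF U w] sum_distrib_left)
  also have "\<dots> = 0"
    using Uw by simp
  finally have "(\<Sum>a<n. (cmod (w $ a))\<^sup>2) = 0"
    by (metis (no_types, lifting) complex_norm_square mult.commute of_real_eq_0_iff of_real_sum sum.cong)
  then have "\<forall>a<n. cnj (w $ a) = 0"
    by (simp add: sum_nonneg_eq_0_iff)
  then have "\<forall>i<r. cnj (v $ i) = 0"
    using indep U cnj_w unfolding rows_lin_indep_def by auto
  then show ?thesis
    using v by (auto intro!: eq_vecI)
qed

lemma rows_lin_indep_right_pinv:
  assumes U: "U \<in> carrier_mat r n" and indep: "rows_lin_indep U"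
  obtains X where "is_pinv U X" and "U * X = 1\<^sub>m r"
proof -
  define G where "G = U * ctrans U"
  have G: "G \<in> carrier_mat r r" and G_herm: "ctrans G = G"
    unfolding G_def using U by (auto simp: ctrans_mult)
  have "det G \<noteq> 0"
    using det_0_iff_vec_prod_zero[OF G] gram_mat_vec_eq_zero_imp[OF U indep] unfolding G_def by blast
  then obtain B where B: "B \<in> carrier_mat r r" "B * G = 1\<^sub>m r" "G * B = 1\<^sub>m r"
    using det_non_zero_imp_unit[OF G, of "()"] unfolding Units_def ring_mat_def by auto
  have BG: "ctrans B * G = 1\<^sub>m r"
    using B G G_herm ctrans_mult[of G B] by simp
  have "ctrans B = ctrans B * (G * B)"
    using B by simp
  also have "\<dots> = (ctrans B * G) * B"
    by (rule assoc_mult_mat[symmetric, of _ r r _ r _ r]) (use B G in auto)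
  also have "\<dots> = B"
    using B BG by simp
  finally have B_herm: "ctrans B = B" .
  define X where "X = ctrans U * B"
  have X: "X \<in> carrier_mat n r"
    unfolding X_def using U B by auto
  have "U * X = G * B"
    unfolding X_def G_def using U B(1) by (simp add: assoc_mult_mat_dims)
  with B have UX: "U * X = 1\<^sub>m r"
    by simp
  have "ctrans (X * U) = X * U"
    unfolding X_def using U B B_herm by (simp add: ctrans_mult assoc_mult_mat_dims)
  with U X UX have "is_pinv U X"
    unfolding is_pinv_def by auto
  then show thesis
    using UX by (rule that)
qed

section \<open>Sums of cubes\<close>

definition cube_sum :: "complex mat \<Rightarrow> nat \<Rightarrow> nat \<Rightarrow> nat \<Rightarrow> complex" where
  "cube_sum U a b c = (\<Sum>i<dim_row U. U $$ (i,a) * U $$ (i,b) * U $$ (i,c))"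

lemma r_decomp_iff:
  "r_decomp n r T U \<longleftrightarrow> U \<in> carrier_mat r n \<and> rows_lin_indep U \<and>
     (\<forall>a<n. \<forall>b<n. \<forall>c<n. T a b c = cube_sum U a b c)"
  unfolding r_decomp_def rows_lin_indep_def cube_sum_def by auto

lemma sum_product3:
  fixes f g h :: "_ \<Rightarrow> 'a::comm_semiring_1"
  shows "sum f A * sum g B * sum h C = (\<Sum>a\<in>A. \<Sum>b\<in>B. \<Sum>c\<in>C. f a * g b * h c)"
proof -
  have "sum f A * sum g B * sum h C = (\<Sum>a\<in>A. \<Sum>b\<in>B. f a * g b) * sum h C"
    by (simp only: sum_product)
  also have "\<dots> = (\<Sum>a\<in>A. \<Sum>b\<in>B. \<Sum>c\<in>C. f a * g b * h c)"
    by (simp only: sum_distrib_right) (simp only: sum_distrib_left)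
  finally show ?thesis .
qed

lemma contract_cube_sum:
  assumes U: "U \<in> carrier_mat r n" and T: "\<forall>a<n. \<forall>b<n. \<forall>c<n. T a b c = cube_sum U a b c"
  shows "(\<Sum>a<n. \<Sum>b<n. \<Sum>c<n. x a * y b * z c * T a b c) =
    (\<Sum>i<r. (\<Sum>a<n. U $$ (i,a) * x a) * (\<Sum>b<n. U $$ (i,b) * y b) * (\<Sum>c<n. U $$ (i,c) * z c))"
proof -
  have "(\<Sum>a<n. \<Sum>b<n. \<Sum>c<n. x a * y b * z c * T a b c) =
      (\<Sum>a<n. \<Sum>b<n. \<Sum>c<n. \<Sum>i<r. x a * y b * z c * (U $$ (i,a) * U $$ (i,b) * U $$ (i,c)))"
    using U T by (simp add: cube_sum_def sum_distrib_left)
  also have "\<dots> = (\<Sum>i<r. \<Sum>a<n. \<Sum>b<n. \<Sum>c<n. x a * y b * z c * (U $$ (i,a) * U $$ (i,b) * U $$ (i,c)))"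
    by (simp only: sum.swap[where B = "{..<r}"])
  also have "\<dots> = (\<Sum>i<r. (\<Sum>a<n. U $$ (i,a) * x a) * (\<Sum>b<n. U $$ (i,b) * y b) * (\<Sum>c<n. U $$ (i,c) * z c))"
    unfolding sum_product3 by (simp add: mult_ac)
  finally show ?thesis .
qed

lemma tmul3_cube_sum:
  assumes U: "U \<in> carrier_mat r n" and A: "A \<in> carrier_mat n m"
    and T: "\<forall>a<n. \<forall>b<n. \<forall>c<n. T a b c = cube_sum U a b c"
    and "i1 < m" "i2 < m" "i3 < m"
  shows "tmul3 A T i1 i2 i3 = cube_sum (U * A) i1 i2 i3"
proof -
  have "tmul3 A T i1 i2 i3 = (\<Sum>a<n. \<Sum>b<n. \<Sum>c<n. A $$ (a,i1) * A $$ (b,i2) * A $$ (c,i3) * T a b c)"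
    unfolding tmul3_def using A by simp
  also have "\<dots> = (\<Sum>i<r. (\<Sum>a<n. U $$ (i,a) * A $$ (a,i1)) * (\<Sum>b<n. U $$ (i,b) * A $$ (b,i2)) *
      (\<Sum>c<n. U $$ (i,c) * A $$ (c,i3)))"
    by (rule contract_cube_sum[OF U T])
  also have "\<dots> = cube_sum (U * A) i1 i2 i3"
    unfolding cube_sum_def using U A assms by (simp add: index_mult_mat_sum[OF U A] del: index_mult_mat(1))
  finally show ?thesis .
qed

section \<open>Uniqueness of the decomposition up to isometry\<close>

lemma cube_root_of_unity_or_zero:
  fixes z :: complex
  assumes "z ^ 4 = z"
  shows "z = 0 \<or> z ^ 3 = 1"
proof -
  have "z * (z ^ 3 - 1) = 0"
    using assms by (simp add: algebra_simps power_numeral_reduce)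
  then show ?thesis by auto
qed

lemma cnj_mult_self_eq_cube:
  fixes z :: complex
  assumes "z ^ 4 = z"
  shows "cnj z * z = z ^ 3"
proof (cases "z = 0")
  case False
  with assms have z3: "z ^ 3 = 1"
    using cube_root_of_unity_or_zero by blast
  then have "cmod z ^ 3 = 1"
    by (metis norm_one norm_power)
  then have "cmod z = 1"
    by (metis norm_ge_zero power_eq_iff_eq_base power_one zero_less_numeral zero_le_one)
  then have "cnj z * z = 1"
    using complex_norm_square[of z] by (simp add: mult.commute)
  with z3 show ?thesis by simp
qed simp

lemma power_six_eq_of_bool:
  fixes z :: complex
  assumes "z ^ 4 = z"
  shows "z ^ 6 = of_bool (z \<noteq> 0)"
proof (cases "z = 0")
  case False
  with assms have z3: "z ^ 3 = 1"
    using cube_root_of_unity_or_zero by blast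
  have "z ^ 6 = (z ^ 3) ^ 2"
    by (simp flip: power_mult)
  with False z3 show ?thesis by simp
qed simp

(* The row sums of sixth powers count the nonzero entries of a row, so distinct columns of M
   have disjoint supports. *)
lemma ctrans_mult_eq_one_if_cube_root_entries:
  assumes M: "M \<in> carrier_mat m k"
    and entries: "\<forall>j<m. \<forall>i<k. (M $$ (j,i)) ^ 4 = M $$ (j,i)"
    and cols: "\<forall>i<k. (\<Sum>j<m. (M $$ (j,i)) ^ 3) = 1"
    and rows: "\<forall>j<m. (\<Sum>i<k. (M $$ (j,i)) ^ 6) = 1"
  shows "ctrans M * M = 1\<^sub>m k"
proof (rule eq_matI)
  have single_nonzero: "M $$ (j,i) = 0 \<or> M $$ (j,l) = 0"
    if j: "j < m" and il: "i < k" "l < k" "i \<noteq> l" for j i l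
  proof (rule ccontr)
    assume "\<not> ?thesis"
    then have "{i, l} \<subseteq> {..<k} \<inter> {i. M $$ (j,i) \<noteq> 0}"
      using il by auto
    then have "2 \<le> card ({..<k} \<inter> {i. M $$ (j,i) \<noteq> 0})"
      using il card_mono[of "{..<k} \<inter> {i. M $$ (j,i) \<noteq> 0}" "{i, l}"] by simp
    moreover have "(\<Sum>i<k. of_bool (M $$ (j,i) \<noteq> 0) :: complex) = 1"
      using rows entries j by (simp flip: power_six_eq_of_bool)
    ultimately show False
      by simp
  qed
  fix i l assume "i < dim_row (1\<^sub>m k)" "l < dim_col (1\<^sub>m k)"
  then have il: "i < k" "l < k" by auto
  have "(ctrans M * M) $$ (i,l) = (\<Sum>j<m. cnj (M $$ (j,i)) * M $$ (j,l))"
    using M il by (subst index_mult_mat_sum[of _ k m _ k]) auto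
  also have "\<dots> = 1\<^sub>m k $$ (i,l)"
  proof (cases "i = l")
    case True
    then show ?thesis
      using il cols entries by (simp add: cnj_mult_self_eq_cube)
  next
    case False
    then show ?thesis
      using il single_nonzero by (auto intro!: sum.neutral)
  qed
  finally show "(ctrans M * M) $$ (i,l) = 1\<^sub>m k $$ (i,l)" .
qed (use M in auto)

lemma cube_sum_dual_expansion:
  assumes U: "U \<in> carrier_mat r n" and X: "X \<in> carrier_mat n r" and UX: "U * X = 1\<^sub>m r"
    and V: "V \<in> carrier_mat r' n"
    and same: "\<forall>a<n. \<forall>b<n. \<forall>c<n. cube_sum U a b c = cube_sum V a b c"
  shows "U = transpose_mat (map_mat (\<lambda>z. z\<^sup>2) (V * X)) * V"
    and "k < r \<Longrightarrow> (\<Sum>j<r'. ((V * X) $$ (j,k)) ^ 3) = 1"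
proof -
  have expansion: "(\<Sum>c<n. U $$ (k,c) * z c) = (\<Sum>j<r'. ((V * X) $$ (j,k))\<^sup>2 * (\<Sum>c<n. V $$ (j,c) * z c))"
    if k: "k < r" for k z
  proof -
    have dual: "(\<Sum>a<n. U $$ (i,a) * X $$ (a,k)) = of_bool (i = k)" if "i < r" for i
      using index_mult_mat_sum[OF U X that k, symmetric] UX that k by simp
    have "(\<Sum>c<n. U $$ (k,c) * z c) =
        (\<Sum>i<r. (\<Sum>a<n. U $$ (i,a) * X $$ (a,k)) * (\<Sum>b<n. U $$ (i,b) * X $$ (b,k)) * (\<Sum>c<n. U $$ (i,c) * z c))"
      using k by (simp add: dual flip: of_bool_conj)
    also have "\<dots> = (\<Sum>a<n. \<Sum>b<n. \<Sum>c<n. X $$ (a,k) * X $$ (b,k) * z c * cube_sum U a b c)"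
      by (rule contract_cube_sum[OF U, symmetric]) simp
    also have "\<dots> = (\<Sum>j<r'. (\<Sum>a<n. V $$ (j,a) * X $$ (a,k)) * (\<Sum>b<n. V $$ (j,b) * X $$ (b,k)) * (\<Sum>c<n. V $$ (j,c) * z c))"
      by (rule contract_cube_sum[OF V same])
    also have "\<dots> = (\<Sum>j<r'. ((V * X) $$ (j,k))\<^sup>2 * (\<Sum>c<n. V $$ (j,c) * z c))"
      using V X k by (simp add: index_mult_mat_sum[OF V X] power2_eq_square del: index_mult_mat(1))
    finally show ?thesis .
  qed
  show "U = transpose_mat (map_mat (\<lambda>z. z\<^sup>2) (V * X)) * V"
  proof (rule eq_matI)
    fix k c assume "k < dim_row (transpose_mat (map_mat (\<lambda>z. z\<^sup>2) (V * X)) * V)"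
      and "c < dim_col (transpose_mat (map_mat (\<lambda>z. z\<^sup>2) (V * X)) * V)"
    then have k: "k < r" and c: "c < n"
      using X V by auto
    show "U $$ (k,c) = (transpose_mat (map_mat (\<lambda>z. z\<^sup>2) (V * X)) * V) $$ (k,c)"
      using expansion[OF k, of "\<lambda>a. of_bool (a = c)"] k c V X
      by (simp add: index_mult_mat_sum[of _ r r' V n] del: index_mult_mat(1))
  qed (use U V X in auto)
  show "(\<Sum>j<r'. ((V * X) $$ (j,k)) ^ 3) = 1" if k: "k < r"
    using expansion[OF k, of "\<lambda>a. X $$ (a,k)"] k U X V UX
    by (simp add: index_mult_mat_sum[OF U X, symmetric] index_mult_mat_sum[OF V X, symmetric]
        power2_eq_square power3_eq_cube del: index_mult_mat(1))
qed

lemma mult_right_inverse_cancel: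
  fixes A :: "'a :: semiring_1 mat"
  assumes "A \<in> carrier_mat m k" "V \<in> carrier_mat k n" "Y \<in> carrier_mat n k" "V * Y = 1\<^sub>m k"
  shows "A * V * Y = A"
  using assms by (simp add: assoc_mult_mat[of A m k V n Y k])

lemma cube_sum_eq_imp_isometry:
  assumes U: "U \<in> carrier_mat r n" "rows_lin_indep U"
    and V: "V \<in> carrier_mat r' n" "rows_lin_indep V"
    and same: "\<forall>a<n. \<forall>b<n. \<forall>c<n. cube_sum U a b c = cube_sum V a b c"
  obtains M where "M \<in> carrier_mat r' r" and "V = M * U" and "ctrans M * M = 1\<^sub>m r"
proof -
  obtain X where "is_pinv U X" and UX: "U * X = 1\<^sub>m r"
    using rows_lin_indep_right_pinv[OF U] .
  then have X: "X \<in> carrier_mat n r"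
    using U by (simp add: is_pinv_def)
  obtain Y where "is_pinv V Y" and VY: "V * Y = 1\<^sub>m r'"
    using rows_lin_indep_right_pinv[OF V] .
  then have Y: "Y \<in> carrier_mat n r'"
    using V by (simp add: is_pinv_def)
  define M where "M = V * X"
  define N where "N = U * Y"
  have M: "M \<in> carrier_mat r' r" and N: "N \<in> carrier_mat r r'"
    unfolding M_def N_def using U V X Y by auto
  note U_expansion = cube_sum_dual_expansion[OF U(1) X UX V(1) same, folded M_def]
  have same': "\<forall>a<n. \<forall>b<n. \<forall>c<n. cube_sum V a b c = cube_sum U a b c"
    using same by simp
  note V_expansion = cube_sum_dual_expansion[OF V(1) Y VY U(1) same', folded N_def]
  have N_eq: "N = transpose_mat (map_mat (\<lambda>z. z\<^sup>2) M)"
    unfolding N_def by (subst U_expansion(1), rule mult_right_inverse_cancel) (use M V Y VY in auto)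
  have M_eq: "M = transpose_mat (map_mat (\<lambda>z. z\<^sup>2) N)"
    unfolding M_def by (subst V_expansion(1), rule mult_right_inverse_cancel) (use N U X UX in auto)
  have M_entry: "M $$ (j,k) = (N $$ (k,j))\<^sup>2" if "j < r'" "k < r" for j k
    using that N by (subst M_eq) simp
  have N_entry: "N $$ (k,j) = (M $$ (j,k))\<^sup>2" if "j < r'" "k < r" for j k
    using that M by (subst N_eq) simp
  have entries: "\<forall>j<r'. \<forall>k<r. (M $$ (j,k)) ^ 4 = M $$ (j,k)"
    using M_entry N_entry power_mult[of _ 2 2] by simp
  have rows: "\<forall>j<r'. (\<Sum>k<r. (M $$ (j,k)) ^ 6) = 1"
    using V_expansion(2) N_entry power_mult[of _ 2 3] by simp
  have "V = M * U"
    using V_expansion(1) M_eq by simp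
  moreover have "ctrans M * M = 1\<^sub>m r"
    using ctrans_mult_eq_one_if_cube_root_entries[OF M entries] U_expansion(2) rows by blast
  ultimately show thesis
    using M that by blast
qed

lemma kappa_eq_kappa_mat:
  assumes "r_decomp n r T U"
  shows "kappa n T = kappa_mat U"
proof -
  define U' where "U' = (SOME U. \<exists>r. r_decomp n r T U)"
  have "\<exists>r'. r_decomp n r' T U'"
    unfolding U'_def by (rule someI_ex) (use assms in blast)
  then obtain r' where "r_decomp n r' T U'" ..
  then have U': "U' \<in> carrier_mat r' n" "rows_lin_indep U'"
    and T': "\<forall>a<n. \<forall>b<n. \<forall>c<n. T a b c = cube_sum U' a b c"
    by (simp_all add: r_decomp_iff)
  from assms have U: "U \<in> carrier_mat r n" "rows_lin_indep U"
    and T: "\<forall>a<n. \<forall>b<n. \<forall>c<n. T a b c = cube_sum U a b c"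
    by (simp_all add: r_decomp_iff)
  obtain M where M: "M \<in> carrier_mat r' r" "U' = M * U" "ctrans M * M = 1\<^sub>m r"
    using cube_sum_eq_imp_isometry[OF U U'] T T' by auto
  obtain X where "is_pinv U X"
    using rows_lin_indep_right_pinv[OF U] .
  have "kappa n T = kappa_mat U'"
    unfolding kappa_def kappa_mat_def U'_def Let_def ..
  also have "\<dots> = kappa_mat U"
    using kappa_mat_mult_isometry[OF \<open>is_pinv U X\<close>] M U by simp
  finally show ?thesis .
qed

section \<open>Compression to the span of the decomposition\<close>

lemma col_eq_mult_unit_vec:
  fixes B :: "'a :: semiring_1 mat"
  assumes "B \<in> carrier_mat n k" "i < k"
  shows "col B i = B *\<^sub>v unit_vec k i"
  using assms by (auto intro!: eq_vecI simp: scalar_prod_def unit_vec_def if_distrib[of "times _"] cong: if_cong)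

lemma proj_mult_eq_if_cols_in_range:
  assumes P: "P \<in> carrier_mat n r" and isometry: "ctrans P * P = 1\<^sub>m r"
    and B: "B \<in> carrier_mat n k"
    and range: "\<forall>i<k. col B i \<in> (\<lambda>x. P *\<^sub>v x) ` carrier_vec r"
  shows "P * ctrans P * B = B"
proof (rule mat_col_eqI)
  have P': "ctrans P \<in> carrier_mat r n"
    using P by auto
  fix i assume "i < dim_col B"
  then obtain x where x: "x \<in> carrier_vec r" and Bi: "col B i = P *\<^sub>v x"
    using range B by auto
  have "col (P * ctrans P * B) i = (P * ctrans P) *\<^sub>v (P *\<^sub>v x)"
    using col_mult2[of "P * ctrans P" n n B k i] P B \<open>i < dim_col B\<close> Bi by auto
  also have "\<dots> = P *\<^sub>v (ctrans P *\<^sub>v (P *\<^sub>v x))"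
    by (rule assoc_mult_mat_vec[OF P P']) (use P x in auto)
  also have "\<dots> = P *\<^sub>v ((ctrans P * P) *\<^sub>v x)"
    by (subst assoc_mult_mat_vec[OF P' P x]) (rule refl)
  finally show "col (P * ctrans P * B) i = col B i"
    using isometry x Bi by simp
qed (use P B in auto)

lemma mult_conj_mult_transpose_eq_self:
  assumes P: "P \<in> carrier_mat n r" and isometry: "ctrans P * P = 1\<^sub>m r"
    and U: "U \<in> carrier_mat k n"
    and range: "(\<lambda>x. P *\<^sub>v x) ` carrier_vec r = (\<lambda>c. transpose_mat U *\<^sub>v c) ` carrier_vec k"
  shows "U * conj_mat P * transpose_mat P = U"
proof -
  have "P * ctrans P * transpose_mat U = transpose_mat U"
    using U range col_eq_mult_unit_vec[of "transpose_mat U" n k]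
    by (intro proj_mult_eq_if_cols_in_range[OF P isometry]) auto
  then have "U = transpose_mat (P * ctrans P * transpose_mat U)"
    by simp
  also have "\<dots> = U * transpose_mat (P * ctrans P)"
    using U P by (simp add: transpose_mult[of _ n n _ k])
  also have "\<dots> = U * (conj_mat P * transpose_mat P)"
    using P by (simp add: transpose_mult[of _ n r _ n] transpose_ctrans)
  also have "\<dots> = U * conj_mat P * transpose_mat P"
    using U P by (simp add: assoc_mult_mat_dims conj_mat_def)
  finally show ?thesis ..
qed

lemma rows_lin_indep_left_factor:
  assumes V: "V \<in> carrier_mat r m" and Q: "Q \<in> carrier_mat m n"
    and indep: "rows_lin_indep (V * Q)"
  shows "rows_lin_indep V"
  unfolding rows_lin_indep_def
proof (intro allI impI)
  fix c i assume c: "\<forall>a<dim_col V. (\<Sum>i<dim_row V. c i * V $$ (i,a)) = 0" and "i < dim_row V"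
  have "(\<Sum>i<r. c i * (V * Q) $$ (i,a)) = (\<Sum>l<m. (\<Sum>i<r. c i * V $$ (i,l)) * Q $$ (l,a))"
    if "a < n" for a
    using that V Q
    by (simp add: index_mult_mat_sum[OF V Q] sum_distrib_left sum_distrib_right mult_ac sum.swap[of _ "{..<r}"]
        del: index_mult_mat(1))
  then have "\<forall>a<n. (\<Sum>i<r. c i * (V * Q) $$ (i,a)) = 0"
    using c V by simp
  then show "c i = 0"
    using indep \<open>i < dim_row V\<close> V Q unfolding rows_lin_indep_def by auto
qed

lemma transpose_isometry_is_coisometry:
  assumes "P \<in> carrier_mat n r" and "ctrans P * P = 1\<^sub>m r"
  shows "transpose_mat P * ctrans (transpose_mat P) = 1\<^sub>m r"
proof -
  have "transpose_mat P * ctrans (transpose_mat P) = transpose_mat (ctrans P * P)"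
    using assms(1) by (simp add: transpose_mult[of _ r n _ r] transpose_ctrans ctrans_transpose)
  then show ?thesis
    using assms(2) by simp
qed

theorem theorem5p4:
  fixes n r :: nat and T :: "nat \<Rightarrow> nat \<Rightarrow> nat \<Rightarrow> complex" and U P :: "complex mat"
  assumes decomp: "r_decomp n r T U"
    and P_dim: "P \<in> carrier_mat n r"
    and P_semi_unitary: "ctrans P * P = 1\<^sub>m r"
    and P_span: "(\<lambda>x. P *\<^sub>v x) ` carrier_vec r = (\<lambda>c. transpose_mat U *\<^sub>v c) ` carrier_vec r"
  shows "diagonalisable r (tmul3 (conj_mat P) T) \<and> kappa n T = kappa r (tmul3 (conj_mat P) T)"
proof -
  from decomp have U: "U \<in> carrier_mat r n" "rows_lin_indep U"
    and T: "\<forall>a<n. \<forall>b<n. \<forall>c<n. T a b c = cube_sum U a b c"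
    by (simp_all add: r_decomp_iff)
  define V where "V = U * conj_mat P"
  have conj_P: "conj_mat P \<in> carrier_mat n r" and V: "V \<in> carrier_mat r r"
    unfolding V_def conj_mat_def using U P_dim by auto
  have U_eq: "U = V * transpose_mat P"
    unfolding V_def using mult_conj_mult_transpose_eq_self[OF P_dim P_semi_unitary U(1) P_span] by simp
  have "rows_lin_indep V"
    using rows_lin_indep_left_factor[OF V _ U(2)[unfolded U_eq]] P_dim by simp
  then have V_decomp: "r_decomp r r (tmul3 (conj_mat P) T) V"
    using V tmul3_cube_sum[OF U(1) conj_P T] unfolding r_decomp_iff V_def by auto
  obtain X where "is_pinv V X"
    using rows_lin_indep_right_pinv[OF V \<open>rows_lin_indep V\<close>] .
  have "kappa n T = kappa_mat (V * transpose_mat P)"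
    using kappa_eq_kappa_mat[OF decomp] U_eq by simp
  also have "\<dots> = kappa_mat V"
    using kappa_mat_mult_coisometry[OF \<open>is_pinv V X\<close>] transpose_isometry_is_coisometry[OF P_dim P_semi_unitary]
      V P_dim by simp
  also have "\<dots> = kappa r (tmul3 (conj_mat P) T)"
    by (rule kappa_eq_kappa_mat[OF V_decomp, symmetric])
  finally show ?thesis
    using V_decomp unfolding diagonalisable_def r_diagonalisable_def by blast
qed

end
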